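(* Let $\hat{\bm h}_k\in\hat{\mathcal H}_k$ be a fixed predictor (chosen independently of the samples), let $\alpha\in[0,1]$ and $\delta\in(0,1)$. Then, with probability at least $1-\delta$ over the draw of the samples $\hat{\mathcal D}_k$ and $\hat{\mathcal D}_{\text{proxy}}$, \[ \mathcal{L}_{\mathcal{D}_{\text{test}}}(\hat{\bm h}_k,\hat{\bm h}^* )\le \mathcal{L}_{\hat{\mathcal D}_k\cup\hat{\mathcal D}_{\text{proxy}}}(\hat{\bm h}_k)+\sqrt{\Big(\tfrac{2\alpha^2}{m_k}+\tfrac{2(1-\alpha)^2}{m_{\text{proxy}}}\Big)\log\tfrac{2}{\delta}}+\alpha\big[\lambda_k+d_{\mathcal G_k}(\mathcal D_k,\mathcal D_{\text{test}})\big] \] \[ +(1-\alpha)\Big[\lambda_{k,\text{proxy}}+d_{\mathcal G_k}(\mathcal D_{\text{proxy}},\mathcal D_{\text{test}})+p^{(1)}_{\text{proxy}}\,\mathcal L_{\mathcal D^{(1)}_{\text{proxy}}}(\hat{\bm h}^*,\bm h^*_{\text{proxy}})+p^{(2)}_{\text{proxy}}\,\mathcal L_{\mathcal D^{(2)}_{\text{proxy}}}(\hat{\bm h}^*_{\text{proxy}},\bm h^*_{\text{proxy}})\Big], \] where $p^{(1)}_{\text{proxy}}=\Pr_{\mathbf x\sim\mathcal D_{\text{proxy}}}[\hat{\bm h}^*(\mathbf x)\neq\hat{\bm h}^*_{\text{proxy}}(\mathbf x)]$, $p^{(2)}_{\text{proxy}}=\Pr_{\mathbf x\sim\mathcal D_{\text{proxy}}}[\hat{\bm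 h}^*(\mathbf x)=\hat{\bm h}^*_{\text{proxy}}(\mathbf x)]$ (so $p^{(1)}_{\text{proxy}}+p^{(2)}_{\text{proxy}}=1$), and $\mathcal D^{(1)}_{\text{proxy}}$, $\mathcal D^{(2)}_{\text{proxy}}$ are the distribution $\mathcal D_{\text{proxy}}$ conditioned on the events $\{\hat{\bm h}^*(\mathbf x)\neq\hat{\bm h}^*_{\text{proxy}}(\mathbf x)\}$ and $\{\hat{\bm h}^*(\mathbf x)=\hat{\bm h}^*_{\text{proxy}}(\mathbf x)\}$ respectively (a term is taken to be $0$ when its probability is $0$).
   Context: Let $\mathcal X$ be a (measurable) input space and $C\ge 2$ the number of classes. $\Delta^{C-1}\subset\mathbb R^C$ is the probability simplex and $V(\Delta^{C-1})$ its vertex set, i.e. the $C$ one-hot vectors. The ground-truth labeling function is $\hat{\bm h}^*:\mathcal X\to V(\Delta^{C-1})$. For a distribution $\mathcal D$ on $\mathcal X$ and functions $\bm h,\bm h':\mathcal X\to\Delta^{C-1}$, $\mathcal L_{\mathcal D}(\bm h,\bm h'):=\mathbb E_{\mathbf x\sim\mathcal D}\|\bm h(\mathbf x)-\bm h'(\mathbf x)\|_1$; for a finite sample $\hat{\mathcal D}$ this expectation is the empirical average over the sample. Client $k$ has a private distribution $\mathcal D_k$ on $\mathcal X$ and an i.i.d. sample $\hat{\mathcal D}_k$ of size $m_k$ from it; there is a proxy distribution $\mathcal D_{\text{proxy}}$ on $\mathcal X$ with an i.i.d. sample $\hat{\mathcal D}_{\text{proxy}}$ of size $m_{\text{proxy}}$,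 independent of $\hat{\mathcal D}_k$; $\mathcal D_{\text{test}}$ is a test distribution on $\mathcal X$. $\bm h^*_{\text{proxy}}:\mathcal X\to\Delta^{C-1}$ is a fixed (arbitrary) labeling function for proxy samples and $\hat{\bm h}^*_{\text{proxy}}:\mathcal X\to V(\Delta^{C-1})$ is its one-hot output (the vertex at its largest coordinate, ties broken by a fixed rule). $\hat{\mathcal H}_k$ is a class of functions $\mathcal X\to V(\Delta^{C-1})$ containing $\hat{\bm h}_k$. The training loss is $\mathcal L_{\hat{\mathcal D}_k\cup\hat{\mathcal D}_{\text{proxy}}}(\hat{\bm h}_k):=\alpha\,\mathcal L_{\hat{\mathcal D}_k}(\hat{\bm h}_k,\hat{\bm h}^* )+(1-\alpha)\,\mathcal L_{\hat{\mathcal D}_{\text{proxy}}}(\hat{\bm h}_k,\bm h^*_{\text{proxy}})$. Minimum combined losses: $\lambda_k=\inf_{\hat{\bm h}\in\hat{\mathcal H}_k}\{\mathcal L_{\mathcal D_{\text{test}}}(\hat{\bm h},\hat{\bm h}^* )+\mathcal L_{\mathcal D_k}(\hat{\bm h},\hat{\bm h}^* )\}$ and $\lambda_{k,\text{proxy}}=\inf_{\hat{\bm h}\in\hat{\mathcal H}_k}\{\mathcal L_{\mathcal D_{\text{test}}}(\hat{\bm h},\hat{\bm h}^* )+\mathcal L_{\mathcal D_{\text{proxy}}}(\hat{\bm h},\hat{\bm h}^* )\}$. $\mathcal G_k$ is the set of functions $g:\mathcal X\to\{0,1\}$ of the form $g(\mathbf x)=\tfrac12\|\hat{\bm h}(\mathbf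 x)-\hat{\bm h}'(\mathbf x)\|_1$ with $\hat{\bm h},\hat{\bm h}'\in\hat{\mathcal H}_k$. For distributions $\mathcal D,\mathcal D'$ on $\mathcal X$, the $\mathcal G_k$-distance is $d_{\mathcal G_k}(\mathcal D,\mathcal D')=2\sup_{g\in\mathcal G_k}\big|\Pr_{\mathcal D}[g(\mathbf x)=1]-\Pr_{\mathcal D'}[g(\mathbf x)=1]\big|$. *)

theory Defs
  imports "HOL-Probability.Probability"
begin

definition onehot :: "'c \<Rightarrow> 'c \<Rightarrow> real" where
  "onehot j = (\<lambda>i. if i = j then 1 else 0)"

definition prob_simplex :: "('c::finite \<Rightarrow> real) set" where
  "prob_simplex = {p. (\<forall>i. 0 \<le> p i) \<and> sum p UNIV = 1}"

definition simplex_vertices :: "('c::finite \<Rightarrow> real) set" where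
  "simplex_vertices = range onehot"

definition l1dist :: "('c::finite \<Rightarrow> real) \<Rightarrow> ('c \<Rightarrow> real) \<Rightarrow> real" where
  "l1dist p q = (\<Sum>i\<in>UNIV. \<bar>p i - q i\<bar>)"

definition pop_loss :: "'a measure \<Rightarrow> ('a \<Rightarrow> 'c::finite \<Rightarrow> real) \<Rightarrow> ('a \<Rightarrow> 'c \<Rightarrow> real) \<Rightarrow> real" where
  "pop_loss D h h' = (\<integral>x. l1dist (h x) (h' x) \<partial>D)"

definition emp_loss :: "nat \<Rightarrow> (nat \<Rightarrow> 'a) \<Rightarrow> ('a \<Rightarrow> 'c::finite \<Rightarrow> real) \<Rightarrow> ('a \<Rightarrow> 'c \<Rightarrow> real) \<Rightarrow> real" where
  "emp_loss m S h h' = (\<Sum>i<m. l1dist (h (S i)) (h' (S i))) / real m"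

definition train_loss :: "real \<Rightarrow> nat \<Rightarrow> (nat \<Rightarrow> 'a) \<Rightarrow> nat \<Rightarrow> (nat \<Rightarrow> 'a)
    \<Rightarrow> ('a \<Rightarrow> 'c::finite \<Rightarrow> real) \<Rightarrow> ('a \<Rightarrow> 'c \<Rightarrow> real) \<Rightarrow> ('a \<Rightarrow> 'c \<Rightarrow> real) \<Rightarrow> real" where
  "train_loss \<alpha> mk S mp T h hstar hproxy =
     \<alpha> * emp_loss mk S h hstar + (1 - \<alpha>) * emp_loss mp T h hproxy"

definition min_comb_loss :: "'a measure \<Rightarrow> 'a measure \<Rightarrow> ('a \<Rightarrow> 'c::finite \<Rightarrow> real) set
    \<Rightarrow> ('a \<Rightarrow> 'c \<Rightarrow> real) \<Rightarrow> real" where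
  "min_comb_loss Dtest D H hstar = (INF h\<in>H. pop_loss Dtest h hstar + pop_loss D h hstar)"

definition G_class :: "('a \<Rightarrow> 'c::finite \<Rightarrow> real) set \<Rightarrow> ('a \<Rightarrow> real) set" where
  "G_class H = {(\<lambda>x. (1/2) * l1dist (h x) (h' x)) | h h'. h \<in> H \<and> h' \<in> H}"

definition G_dist :: "('a \<Rightarrow> real) set \<Rightarrow> 'a measure \<Rightarrow> 'a measure \<Rightarrow> real" where
  "G_dist G D D' = 2 * (SUP g\<in>G. \<bar>measure D {x \<in> space D. g x = 1} - measure D' {x \<in> space D'. g x = 1}\<bar>)"

text \<open>p * L_{D|A}(f,g), where D|A is D conditioned on event A (uniform_measure D A);
  taken to be 0 when Pr_D[A] = 0.\<close>
definition cond_term :: "'a measure \<Rightarrow> 'a set \<Rightarrow> ('a \<Rightarrow> 'c::finite \<Rightarrow> real) \<Rightarrow> ('a \<Rightarrow> 'c \<Rightarrow> real) \<Rightarrow> real" where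
  "cond_term D A f g = (if measure D A = 0 then 0 else measure D A * pop_loss (uniform_measure D A) f g)"

definition vec_measurable :: "'a measure \<Rightarrow> ('a \<Rightarrow> 'c \<Rightarrow> real) \<Rightarrow> bool" where
  "vec_measurable M h = (\<forall>i. (\<lambda>x. h x i) \<in> borel_measurable M)"

end

theory Submission
  imports Defs
begin

text \<open>Two triangle inequalities for the L1 loss bound the test loss of the fixed predictor by its
  loss on the client distribution and by its loss against the proxy labels, each up to the
  combined error of the best hypothesis and the distribution shift measured by the disagreement
  class. On the proxy distribution the loss between true and proxy labels is split along the
  event where the true label equals the hard proxy label. Averaging the two bounds with weights
  alpha and 1 - alpha leaves the weighted population loss alpha L_Dk + (1 - alpha) L_Dp, which the
  training loss estimates from two independent samples; Hoeffding's lemma and a Chernoff bound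
  on the product of the two sample spaces control the one-sided deviation by delta/2.\<close>

lemma l1dist_commute: "l1dist p q = l1dist q p"
  unfolding l1dist_def by (simp add: abs_minus_commute)

lemma l1dist_triangle: "l1dist p r \<le> l1dist p q + l1dist q r"
  unfolding l1dist_def
  by (simp add: sum.distrib[symmetric] sum_mono abs_diff_triangle_ineq[of "p _" "q _"])

lemma l1dist_nonneg: "0 \<le> l1dist p q"
  unfolding l1dist_def by (simp add: sum_nonneg)

lemma l1dist_eq_0_iff: "l1dist p q = 0 \<longleftrightarrow> p = q"
proof
  assume "l1dist p q = 0"
  hence "\<forall>i\<in>UNIV. \<bar>p i - q i\<bar> = 0"
    unfolding l1dist_def by (subst (asm) sum_nonneg_eq_0_iff) auto
  thus "p = q" by auto
qed (simp add: l1dist_def)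

lemma l1dist_onehot:
  "l1dist (onehot i :: 'c::finite \<Rightarrow> real) (onehot j) = (if i = j then 0 else 2)"
proof (cases "i = j")
  case False
  have "l1dist (onehot i :: 'c \<Rightarrow> real) (onehot j)
      = (\<Sum>c\<in>UNIV. (if c = i then 1 else 0) + (if c = j then 1 else 0))"
    unfolding l1dist_def onehot_def using False by (intro sum.cong) auto
  also have "\<dots> = 2" by (simp add: sum.distrib)
  finally show ?thesis using False by simp
qed (simp add: l1dist_def)

lemma simplex_vertices_subset_prob_simplex:
  "simplex_vertices \<subseteq> (prob_simplex :: ('c::finite \<Rightarrow> real) set)"
  unfolding simplex_vertices_def prob_simplex_def onehot_def by auto

lemma l1dist_prob_simplex_le_2:
  assumes "p \<in> prob_simplex" "q \<in> prob_simplex"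
  shows "l1dist p q \<le> 2"
proof -
  have "l1dist p q \<le> (\<Sum>i\<in>UNIV. p i + q i)"
    unfolding l1dist_def using assms by (intro sum_mono) (auto simp: prob_simplex_def abs_le_iff)
  also have "\<dots> = 2" using assms by (simp add: sum.distrib prob_simplex_def)
  finally show ?thesis .
qed

lemma borel_measurable_l1dist:
  assumes "vec_measurable M h" "vec_measurable M h'" "sets D = sets M"
  shows "(\<lambda>x. l1dist (h x) (h' x)) \<in> borel_measurable D"
proof -
  have "(\<lambda>x. l1dist (h x) (h' x)) \<in> borel_measurable M"
    using assms(1,2) unfolding l1dist_def vec_measurable_def
    by (intro borel_measurable_sum borel_measurable_abs borel_measurable_diff) auto
  thus ?thesis using measurable_cong_sets[OF assms(3) refl] by blast
qed

lemma integrable_l1dist: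
  assumes "finite_measure D" "sets D = sets M" "vec_measurable M h" "vec_measurable M h'"
    and "\<forall>x. h x \<in> prob_simplex" "\<forall>x. h' x \<in> prob_simplex"
  shows "integrable D (\<lambda>x. l1dist (h x) (h' x))"
proof -
  interpret finite_measure D by fact
  show ?thesis
  proof (rule integrable_const_bound[where B = 2])
    show "AE x in D. norm (l1dist (h x) (h' x)) \<le> 2"
      using assms(5,6) by (intro AE_I2) (simp add: l1dist_nonneg l1dist_prob_simplex_le_2)
  qed (rule borel_measurable_l1dist[OF assms(3,4,2)])
qed

lemma pop_loss_commute: "pop_loss D f g = pop_loss D g f"
  unfolding pop_loss_def by (simp add: l1dist_commute)

lemma pop_loss_triangle:
  assumes D: "prob_space D" "sets D = sets M"
    and m: "vec_measurable M f" "vec_measurable M g" "vec_measurable M h"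
    and s: "\<forall>x. f x \<in> prob_simplex" "\<forall>x. g x \<in> prob_simplex" "\<forall>x. h x \<in> prob_simplex"
  shows "pop_loss D f h \<le> pop_loss D f g + pop_loss D g h"
proof -
  have fin: "finite_measure D" using D(1) by (simp add: prob_space_def)
  have i1: "integrable D (\<lambda>x. l1dist (f x) (g x))" by (rule integrable_l1dist[OF fin D(2) m(1,2) s(1,2)])
  have i2: "integrable D (\<lambda>x. l1dist (g x) (h x))" by (rule integrable_l1dist[OF fin D(2) m(2,3) s(2,3)])
  have i3: "integrable D (\<lambda>x. l1dist (f x) (h x))" by (rule integrable_l1dist[OF fin D(2) m(1,3) s(1,3)])
  have "pop_loss D f h \<le> (\<integral>x. l1dist (f x) (g x) + l1dist (g x) (h x) \<partial>D)"
    unfolding pop_loss_def by (intro integral_mono i3 Bochner_Integration.integrable_add i1 i2 l1dist_triangle)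
  also have "\<dots> = pop_loss D f g + pop_loss D g h"
    unfolding pop_loss_def by (rule Bochner_Integration.integral_add[OF i1 i2])
  finally show ?thesis .
qed

lemma pop_loss_simplex_vertices:
  assumes D: "prob_space D" "sets D = sets M" and m: "vec_measurable M h" "vec_measurable M h'"
    and v: "\<forall>x. h x \<in> simplex_vertices" "\<forall>x. h' x \<in> simplex_vertices"
  shows "pop_loss D h h' = 2 * measure D {x \<in> space D. (1/2) * l1dist (h x) (h' x) = 1}"
proof -
  interpret prob_space D by fact
  note [measurable] = borel_measurable_l1dist[OF m D(2)]
  define S where "S = {x \<in> space D. (1/2) * l1dist (h x) (h' x) = 1}"
  have S[measurable]: "S \<in> sets D" unfolding S_def by measurable
  have "l1dist (h x) (h' x) = 2 * indicator S x" if "x \<in> space D" for x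
  proof -
    obtain i j where "h x = onehot i" "h' x = onehot j" using v unfolding simplex_vertices_def by blast
    thus ?thesis using that by (auto simp: S_def l1dist_onehot indicator_def)
  qed
  hence "pop_loss D h h' = (\<integral>x. 2 * indicator S x \<partial>D)"
    unfolding pop_loss_def by (intro Bochner_Integration.integral_cong) auto
  also have "\<dots> = 2 * measure D S" using S by simp
  finally show ?thesis unfolding S_def .
qed

lemma pop_loss_le_G_dist:
  assumes D: "prob_space D" "sets D = sets M" and D': "prob_space D'" "sets D' = sets M"
    and H: "\<forall>h\<in>H. (\<forall>x. h x \<in> simplex_vertices) \<and> vec_measurable M h"
    and h: "h \<in> H" "h' \<in> H"
  shows "pop_loss D' h h' \<le> pop_loss D h h' + G_dist (G_class H) D D'"
proof -
  define g where "g = (\<lambda>x. (1/2) * l1dist (h x) (h' x))"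
  define F where "F = (\<lambda>q::'a \<Rightarrow> real.
    \<bar>measure D {x \<in> space D. q x = 1} - measure D' {x \<in> space D'. q x = 1}\<bar>)"
  have "g \<in> G_class H" unfolding g_def G_class_def using h by blast
  moreover have "bdd_above (F ` G_class H)"
  proof (rule bdd_aboveI[where M = 1])
    fix y assume "y \<in> F ` G_class H"
    then obtain q where "y = F q" by blast
    thus "y \<le> 1" unfolding F_def
      using prob_space.prob_le_1[OF D(1)] prob_space.prob_le_1[OF D'(1)]
        measure_nonneg[of D] measure_nonneg[of D'] by (smt (verit))
  qed
  ultimately have "F g \<le> (SUP q\<in>G_class H. F q)" by (rule cSUP_upper)
  moreover have "pop_loss D' h h' = 2 * measure D' {x \<in> space D'. g x = 1}"
    unfolding g_def by (rule pop_loss_simplex_vertices) (use D' H h in auto)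
  moreover have "pop_loss D h h' = 2 * measure D {x \<in> space D. g x = 1}"
    unfolding g_def by (rule pop_loss_simplex_vertices) (use D H h in auto)
  ultimately show ?thesis unfolding G_dist_def F_def by linarith
qed

lemma pop_loss_le_min_comb_loss:
  assumes D: "prob_space D" "sets D = sets M" and D': "prob_space D'" "sets D' = sets M"
    and H: "\<forall>h\<in>H. (\<forall>x. h x \<in> simplex_vertices) \<and> vec_measurable M h"
    and hstar: "\<forall>x. hstar x \<in> simplex_vertices" "vec_measurable M hstar"
    and h: "h \<in> H"
  shows "pop_loss D' h hstar
    \<le> pop_loss D h hstar + min_comb_loss D' D H hstar + G_dist (G_class H) D D'"
proof -
  have simplex: "\<And>p. p \<in> simplex_vertices \<Longrightarrow> p \<in> prob_simplex"
    using simplex_vertices_subset_prob_simplex by blast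
  have "pop_loss D' h hstar - pop_loss D h hstar - G_dist (G_class H) D D' \<le> min_comb_loss D' D H hstar"
    unfolding min_comb_loss_def
  proof (rule cINF_greatest)
    show "H \<noteq> {}" using h by blast
    fix h' assume h': "h' \<in> H"
    have "pop_loss D' h hstar \<le> pop_loss D' h h' + pop_loss D' h' hstar"
      by (rule pop_loss_triangle[OF D']) (use H h h' hstar simplex in auto)
    moreover have "pop_loss D h h' \<le> pop_loss D h hstar + pop_loss D hstar h'"
      by (rule pop_loss_triangle[OF D]) (use H h h' hstar simplex in auto)
    moreover have "pop_loss D' h h' \<le> pop_loss D h h' + G_dist (G_class H) D D'"
      by (rule pop_loss_le_G_dist[OF D D' H h h'])
    ultimately show "pop_loss D' h hstar - pop_loss D h hstar - G_dist (G_class H) D D'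
       \<le> pop_loss D' h' hstar + pop_loss D h' hstar"
      using pop_loss_commute[of D hstar h'] by linarith
  qed
  thus ?thesis by linarith
qed

lemma cond_term_eq_integral:
  assumes D: "prob_space D" "sets D = sets M" and A: "A \<in> sets D"
    and m: "vec_measurable M f" "vec_measurable M g"
    and s: "\<forall>x. f x \<in> prob_simplex" "\<forall>x. g x \<in> prob_simplex"
  shows "cond_term D A f g = (\<integral>x. l1dist (f x) (g x) * indicator A x \<partial>D)"
proof -
  interpret prob_space D by fact
  note [measurable] = borel_measurable_l1dist[OF m D(2)]
  have "integrable D (\<lambda>x. l1dist (f x) (g x))"
    by (rule integrable_l1dist[OF finite_measure_axioms D(2) m s])
  hence iA: "integrable D (\<lambda>x. l1dist (f x) (g x) * indicator A x)"
    by (rule integrable_real_mult_indicator[OF A])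
  have nn: "0 \<le> (\<integral>x. l1dist (f x) (g x) * indicator A x \<partial>D)"
    by (rule Bochner_Integration.integral_nonneg) (simp add: l1dist_nonneg)
  show ?thesis
  proof (cases "measure D A = 0")
    case True
    have "(\<integral>x. l1dist (f x) (g x) * indicator A x \<partial>D) \<le> (\<integral>x. 2 * indicator A x \<partial>D)"
    proof (rule integral_mono[OF iA])
      show "integrable D (\<lambda>x. 2 * indicator A x :: real)"
        using A by (simp add: emeasure_eq_measure)
    qed (use s in \<open>auto simp: indicator_def l1dist_prob_simplex_le_2\<close>)
    also have "\<dots> = 0" using True A by simp
    finally show ?thesis using True nn unfolding cond_term_def by simp
  next
    case False
    have pos: "measure D A > 0" using False measure_nonneg[of D A] by linarith
    have "pop_loss (uniform_measure D A) f g
        = enn2real (\<integral>\<^sup>+x. ennreal (l1dist (f x) (g x)) \<partial>uniform_measure D A)"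
      unfolding pop_loss_def
      by (rule integral_eq_nn_integral) (auto simp: l1dist_nonneg measurable_cong_sets[OF sets_uniform_measure refl])
    also have "(\<integral>\<^sup>+x. ennreal (l1dist (f x) (g x)) \<partial>uniform_measure D A)
        = (\<integral>\<^sup>+x. ennreal (l1dist (f x) (g x) * indicator A x) \<partial>D) / emeasure D A"
      using A by (subst nn_integral_uniform_measure) (auto simp: indicator_def intro!: arg_cong2[where f = "(/)"] nn_integral_cong)
    also have "\<dots> = ennreal ((\<integral>x. l1dist (f x) (g x) * indicator A x \<partial>D) / measure D A)"
      using nn_integral_eq_integral[OF iA] divide_ennreal[OF nn pos]
      by (simp add: emeasure_eq_measure l1dist_nonneg)
    finally have "pop_loss (uniform_measure D A) f g
        = (\<integral>x. l1dist (f x) (g x) * indicator A x \<partial>D) / measure D A"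
      using nn pos by simp
    thus ?thesis using False unfolding cond_term_def by simp
  qed
qed

lemma pop_loss_eq_cond_term_split:
  assumes D: "prob_space D" "sets D = sets M"
    and hstar: "\<forall>x. hstar x \<in> prob_simplex" "vec_measurable M hstar"
    and hp: "\<forall>x. hp x \<in> prob_simplex" "vec_measurable M hp"
    and hp_hat: "\<forall>x. hp_hat x \<in> prob_simplex" "vec_measurable M hp_hat"
  shows "pop_loss D hp hstar = cond_term D {x \<in> space D. hstar x \<noteq> hp_hat x} hstar hp
            + cond_term D {x \<in> space D. hstar x = hp_hat x} hp_hat hp"
proof -
  interpret prob_space D by fact
  note [measurable] = borel_measurable_l1dist[OF hstar(2) hp_hat(2) D(2)]
  define A where "A = {x \<in> space D. hstar x \<noteq> hp_hat x}"
  define B where "B = {x \<in> space D. hstar x = hp_hat x}"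
  have A: "A \<in> sets D"
  proof -
    have "A = {x \<in> space D. l1dist (hstar x) (hp_hat x) \<noteq> 0}" unfolding A_def by (simp add: l1dist_eq_0_iff)
    also have "\<dots> \<in> sets D" by measurable
    finally show ?thesis .
  qed
  have B: "B = space D - A" unfolding A_def B_def by auto
  hence B_sets: "B \<in> sets D" using A by auto
  have i1: "integrable D (\<lambda>x. l1dist (hstar x) (hp x))"
    by (rule integrable_l1dist[OF finite_measure_axioms D(2) hstar(2) hp(2) hstar(1) hp(1)])
  have i2: "integrable D (\<lambda>x. l1dist (hp_hat x) (hp x))"
    by (rule integrable_l1dist[OF finite_measure_axioms D(2) hp_hat(2) hp(2) hp_hat(1) hp(1)])
  have "pop_loss D hp hstar
      = (\<integral>x. l1dist (hstar x) (hp x) * indicator A x + l1dist (hp_hat x) (hp x) * indicator B x \<partial>D)"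
    unfolding pop_loss_def
    by (intro Bochner_Integration.integral_cong) (auto simp: A_def B_def indicator_def l1dist_commute)
  also have "\<dots> = (\<integral>x. l1dist (hstar x) (hp x) * indicator A x \<partial>D)
      + (\<integral>x. l1dist (hp_hat x) (hp x) * indicator B x \<partial>D)"
    by (intro Bochner_Integration.integral_add integrable_real_mult_indicator A B_sets i1 i2)
  also have "\<dots> = cond_term D A hstar hp + cond_term D B hp_hat hp"
    using cond_term_eq_integral[OF D A hstar(2) hp(2) hstar(1) hp(1)]
      cond_term_eq_integral[OF D B_sets hp_hat(2) hp(2) hp_hat(1) hp(1)] by simp
  finally show ?thesis unfolding A_def B_def .
qed

lemma pop_loss_le_via_proxy:
  assumes D: "prob_space D" "sets D = sets M" and D': "prob_space D'" "sets D' = sets M"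
    and H: "\<forall>h\<in>H. (\<forall>x. h x \<in> simplex_vertices) \<and> vec_measurable M h"
    and hstar: "\<forall>x. hstar x \<in> simplex_vertices" "vec_measurable M hstar"
    and hp: "\<forall>x. hp x \<in> prob_simplex" "vec_measurable M hp"
    and hp_hat: "\<forall>x. hp_hat x \<in> simplex_vertices" "vec_measurable M hp_hat"
    and h: "h \<in> H"
  shows "pop_loss D' h hstar
    \<le> pop_loss D h hp + min_comb_loss D' D H hstar + G_dist (G_class H) D D'
       + cond_term D {x \<in> space D. hstar x \<noteq> hp_hat x} hstar hp
       + cond_term D {x \<in> space D. hstar x = hp_hat x} hp_hat hp"
proof -
  have simplex: "\<forall>x. f x \<in> prob_simplex" if "\<forall>x. f x \<in> simplex_vertices" for f :: "'a \<Rightarrow> 'b \<Rightarrow> real"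
    using that simplex_vertices_subset_prob_simplex by blast
  have "pop_loss D h hstar \<le> pop_loss D h hp + pop_loss D hp hstar"
    by (rule pop_loss_triangle[OF D]) (use H h hstar hp simplex in auto)
  moreover have "pop_loss D hp hstar = cond_term D {x \<in> space D. hstar x \<noteq> hp_hat x} hstar hp
      + cond_term D {x \<in> space D. hstar x = hp_hat x} hp_hat hp"
    by (rule pop_loss_eq_cond_term_split[OF D]) (use hstar hp hp_hat simplex in auto)
  ultimately show ?thesis
    using pop_loss_le_min_comb_loss[OF D D' H hstar h] by linarith
qed

lemma pop_loss_le_weighted:
  assumes Dk: "prob_space Dk" "sets Dk = sets M" and Dp: "prob_space Dp" "sets Dp = sets M"
    and Dt: "prob_space Dt" "sets Dt = sets M"
    and H: "\<forall>h\<in>H. (\<forall>x. h x \<in> simplex_vertices) \<and> vec_measurable M h"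
    and hstar: "\<forall>x. hstar x \<in> simplex_vertices" "vec_measurable M hstar"
    and hp: "\<forall>x. hp x \<in> prob_simplex" "vec_measurable M hp"
    and hp_hat: "\<forall>x. hp_hat x \<in> simplex_vertices" "vec_measurable M hp_hat"
    and h: "h \<in> H" and \<alpha>: "0 \<le> \<alpha>" "\<alpha> \<le> 1"
  shows "pop_loss Dt h hstar
    \<le> \<alpha> * pop_loss Dk h hstar + (1 - \<alpha>) * pop_loss Dp h hp
      + (\<alpha> * (min_comb_loss Dt Dk H hstar + G_dist (G_class H) Dk Dt)
      + (1 - \<alpha>) * (min_comb_loss Dt Dp H hstar + G_dist (G_class H) Dp Dt
         + cond_term Dp {x \<in> space Dp. hstar x \<noteq> hp_hat x} hstar hp
         + cond_term Dp {x \<in> space Dp. hstar x = hp_hat x} hp_hat hp))"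
proof -
  have "pop_loss Dt h hstar \<le> pop_loss Dk h hstar
      + (min_comb_loss Dt Dk H hstar + G_dist (G_class H) Dk Dt)"
    using pop_loss_le_min_comb_loss[OF Dk Dt H hstar h] by simp
  moreover have "pop_loss Dt h hstar \<le> pop_loss Dp h hp
      + (min_comb_loss Dt Dp H hstar + G_dist (G_class H) Dp Dt
         + cond_term Dp {x \<in> space Dp. hstar x \<noteq> hp_hat x} hstar hp
         + cond_term Dp {x \<in> space Dp. hstar x = hp_hat x} hp_hat hp)"
    using pop_loss_le_via_proxy[OF Dp Dt H hstar hp hp_hat h] by simp
  ultimately show ?thesis
    using mult_left_mono[of _ _ \<alpha>] mult_left_mono[of _ _ "1 - \<alpha>"] \<alpha> by (fastforce simp: algebra_simps)
qed

lemma Hoeffdings_lemma_scaled_deviation: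
  assumes D: "prob_space D" and f[measurable]: "f \<in> borel_measurable D"
    and f_bounds: "\<forall>x\<in>space D. 0 \<le> f x \<and> f x \<le> b" and c: "0 \<le> c" and l: "0 < l"
  shows "(\<integral>\<^sup>+y. ennreal (exp (l * (c * ((\<integral>x. f x \<partial>D) - f y)))) \<partial>D) \<le> ennreal (exp (l\<^sup>2 * (c * b)\<^sup>2 / 8))"
proof -
  interpret prob_space D by fact
  interpret interval_bounded_random_variable D "\<lambda>y. - (c * f y)" "- (c * b)" 0
  proof
    show "AE x in D. - (c * f x) \<in> {- (c * b)..0}"
      using f_bounds c by (intro AE_I2) (auto intro!: mult_left_mono)
  qed simp
  have "(\<integral>\<^sup>+y. ennreal (exp (l * (c * ((\<integral>x. f x \<partial>D) - f y)))) \<partial>D)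
      = (\<integral>\<^sup>+y. ennreal (exp (l * (- (c * f y) - expectation (\<lambda>y. - (c * f y))))) \<partial>D)"
    by (intro nn_integral_cong) (simp add: algebra_simps)
  also have "\<dots> \<le> ennreal (exp (l\<^sup>2 * (0 - - (c * b))\<^sup>2 / 8))"
    by (rule Hoeffdings_lemma_nn_integral[OF l])
  finally show ?thesis by simp
qed

lemma Chernoff_two_samples:
  fixes u :: "'a \<Rightarrow> real" and v :: "'b \<Rightarrow> real"
  assumes A: "prob_space A" and B: "prob_space B"
    and u[measurable]: "u \<in> borel_measurable A" and v[measurable]: "v \<in> borel_measurable B"
    and l: "0 < l" and c: "0 \<le> cu" "0 \<le> cv"
    and mgf_u: "(\<integral>\<^sup>+y. ennreal (exp (l * u y)) \<partial>A) \<le> ennreal cu"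
    and mgf_v: "(\<integral>\<^sup>+y. ennreal (exp (l * v y)) \<partial>B) \<le> ennreal cv"
  shows "emeasure (PiM {..<m} (\<lambda>_. A) \<Otimes>\<^sub>M PiM {..<n} (\<lambda>_. B))
     {z \<in> space (PiM {..<m} (\<lambda>_. A) \<Otimes>\<^sub>M PiM {..<n} (\<lambda>_. B)).
        \<epsilon> \<le> (\<Sum>i<m. u (fst z i)) + (\<Sum>j<n. v (snd z j))}
     \<le> ennreal (exp (- l * \<epsilon>) * cu ^ m * cv ^ n)"
proof -
  define P1 where "P1 = PiM {..<m} (\<lambda>_. A)"
  define P2 where "P2 = PiM {..<n} (\<lambda>_. B)"
  interpret pA: product_sigma_finite "\<lambda>_. A"
    unfolding product_sigma_finite_def using A prob_space_imp_sigma_finite by blast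
  interpret pB: product_sigma_finite "\<lambda>_. B"
    unfolding product_sigma_finite_def using B prob_space_imp_sigma_finite by blast
  interpret P2: prob_space P2 unfolding P2_def by (rule prob_space_PiM) (use B in auto)
  define Z where "Z = (\<lambda>z. (\<Sum>i<m. u (fst z i)) + (\<Sum>j<n. v (snd z j)))"
  have [measurable]: "Z \<in> borel_measurable (P1 \<Otimes>\<^sub>M P2)" unfolding Z_def P1_def P2_def by measurable
  have "emeasure (P1 \<Otimes>\<^sub>M P2) {z \<in> space (P1 \<Otimes>\<^sub>M P2). \<epsilon> \<le> Z z}
     \<le> ennreal (exp (- l * \<epsilon>)) * (\<integral>\<^sup>+z. ennreal (exp (l * Z z)) * indicator (space (P1 \<Otimes>\<^sub>M P2)) z \<partial>(P1 \<Otimes>\<^sub>M P2))"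
    by (rule Chernoff_ineq_nn_integral_ge[OF l]) measurable
  also have "(\<integral>\<^sup>+z. ennreal (exp (l * Z z)) * indicator (space (P1 \<Otimes>\<^sub>M P2)) z \<partial>(P1 \<Otimes>\<^sub>M P2))
     = (\<integral>\<^sup>+z. (\<Prod>i<m. ennreal (exp (l * u (fst z i)))) * (\<Prod>j<n. ennreal (exp (l * v (snd z j)))) \<partial>(P1 \<Otimes>\<^sub>M P2))"
    by (intro nn_integral_cong)
       (simp add: Z_def distrib_left exp_add sum_distrib_left exp_sum prod_ennreal ennreal_mult prod_nonneg)
  also have "\<dots> = (\<integral>\<^sup>+x. (\<Prod>i<m. ennreal (exp (l * u (x i)))) \<partial>P1) * (\<integral>\<^sup>+y. (\<Prod>j<n. ennreal (exp (l * v (y j)))) \<partial>P2)"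
    by (subst P2.nn_integral_fst[symmetric]) (auto simp: P1_def P2_def nn_integral_cmult nn_integral_multc)
  also have "\<dots> = (\<Prod>i<m. \<integral>\<^sup>+y. ennreal (exp (l * u y)) \<partial>A) * (\<Prod>j<n. \<integral>\<^sup>+y. ennreal (exp (l * v y)) \<partial>B)"
    unfolding P1_def P2_def
    by (subst pA.product_nn_integral_prod, simp, simp, subst pB.product_nn_integral_prod, simp, simp) (rule refl)
  also have "\<dots> \<le> (\<Prod>i<m. ennreal cu) * (\<Prod>j<n. ennreal cv)"
    by (intro mult_mono prod_mono_ennreal mgf_u mgf_v) auto
  finally have "emeasure (P1 \<Otimes>\<^sub>M P2) {z \<in> space (P1 \<Otimes>\<^sub>M P2). \<epsilon> \<le> Z z}
      \<le> ennreal (exp (- l * \<epsilon>)) * ((\<Prod>i<m. ennreal cu) * (\<Prod>j<n. ennreal cv))"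
    by (simp add: mult_left_mono)
  also have "\<dots> = ennreal (exp (- l * \<epsilon>) * cu ^ m * cv ^ n)"
    using c by (simp add: ennreal_power ennreal_mult mult.assoc)
  finally show ?thesis unfolding P1_def P2_def Z_def .
qed

lemma Hoeffding_two_samples:
  fixes f :: "'a \<Rightarrow> real" and g :: "'b \<Rightarrow> real"
  assumes A: "prob_space A" and B: "prob_space B"
    and f[measurable]: "f \<in> borel_measurable A" and g[measurable]: "g \<in> borel_measurable B"
    and f_bounds: "\<forall>x\<in>space A. 0 \<le> f x \<and> f x \<le> b" and g_bounds: "\<forall>y\<in>space B. 0 \<le> g y \<and> g y \<le> b"
    and b: "0 < b" and \<alpha>: "0 \<le> \<alpha>" "\<alpha> \<le> 1" and mn: "0 < m" "0 < n" and \<epsilon>: "0 < \<epsilon>"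
  shows "measure (PiM {..<m} (\<lambda>_. A) \<Otimes>\<^sub>M PiM {..<n} (\<lambda>_. B))
     {z \<in> space (PiM {..<m} (\<lambda>_. A) \<Otimes>\<^sub>M PiM {..<n} (\<lambda>_. B)).
        \<epsilon> \<le> \<alpha> * ((\<integral>x. f x \<partial>A) - (\<Sum>i<m. f (fst z i)) / real m)
           + (1 - \<alpha>) * ((\<integral>y. g y \<partial>B) - (\<Sum>j<n. g (snd z j)) / real n)}
     \<le> exp (- 2 * \<epsilon>\<^sup>2 / (b\<^sup>2 * (\<alpha>\<^sup>2 / real m + (1 - \<alpha>)\<^sup>2 / real n)))"
proof -
  interpret N: prob_space "PiM {..<m} (\<lambda>_. A) \<Otimes>\<^sub>M PiM {..<n} (\<lambda>_. B)"
    by (intro prob_space_pair prob_space_PiM) (use A B in auto)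
  define V where "V = b\<^sup>2 * (\<alpha>\<^sup>2 / real m + (1 - \<alpha>)\<^sup>2 / real n)"
  have "0 < \<alpha>\<^sup>2 / real m + (1 - \<alpha>)\<^sup>2 / real n"
    using mn by (cases "\<alpha> = 0") (auto intro!: add_pos_nonneg)
  hence V: "0 < V" unfolding V_def using b by simp
  define c1 where "c1 = \<alpha> / real m"
  define c2 where "c2 = (1 - \<alpha>) / real n"
  have c: "0 \<le> c1" "0 \<le> c2" unfolding c1_def c2_def using \<alpha> by auto
  define l where "l = 4 * \<epsilon> / V"
  have l: "0 < l" unfolding l_def using \<epsilon> V by simp
  define u where "u = (\<lambda>x. c1 * ((\<integral>x. f x \<partial>A) - f x))"
  define v where "v = (\<lambda>y. c2 * ((\<integral>y. g y \<partial>B) - g y))"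
  have [measurable]: "u \<in> borel_measurable A" "v \<in> borel_measurable B"
    unfolding u_def v_def by measurable
  have sum_u: "(\<Sum>i<m. u (x i)) = \<alpha> * ((\<integral>x. f x \<partial>A) - (\<Sum>i<m. f (x i)) / real m)" for x
  proof -
    have "(\<Sum>i<m. u (x i)) = c1 * (real m * (\<integral>x. f x \<partial>A) - (\<Sum>i<m. f (x i)))"
      unfolding u_def by (simp add: sum_distrib_left[symmetric] sum_subtractf)
    thus ?thesis unfolding c1_def using mn by (simp add: field_simps)
  qed
  have sum_v: "(\<Sum>j<n. v (y j)) = (1 - \<alpha>) * ((\<integral>y. g y \<partial>B) - (\<Sum>j<n. g (y j)) / real n)" for y
  proof -
    have "(\<Sum>j<n. v (y j)) = c2 * (real n * (\<integral>y. g y \<partial>B) - (\<Sum>j<n. g (y j)))"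
      unfolding v_def by (simp add: sum_distrib_left[symmetric] sum_subtractf)
    thus ?thesis unfolding c2_def using mn by (simp add: field_simps)
  qed
  have "emeasure (PiM {..<m} (\<lambda>_. A) \<Otimes>\<^sub>M PiM {..<n} (\<lambda>_. B))
     {z \<in> space (PiM {..<m} (\<lambda>_. A) \<Otimes>\<^sub>M PiM {..<n} (\<lambda>_. B)).
        \<epsilon> \<le> (\<Sum>i<m. u (fst z i)) + (\<Sum>j<n. v (snd z j))}
     \<le> ennreal (exp (- l * \<epsilon>) * exp (l\<^sup>2 * (c1 * b)\<^sup>2 / 8) ^ m * exp (l\<^sup>2 * (c2 * b)\<^sup>2 / 8) ^ n)"
    unfolding u_def v_def
    by (intro Chernoff_two_samples[OF A B _ _ l] Hoeffdings_lemma_scaled_deviation A B l c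
              f_bounds g_bounds f g) auto
  also have "exp (- l * \<epsilon>) * exp (l\<^sup>2 * (c1 * b)\<^sup>2 / 8) ^ m * exp (l\<^sup>2 * (c2 * b)\<^sup>2 / 8) ^ n
      = exp (- l * \<epsilon> + l\<^sup>2 * V / 8)"
    unfolding exp_add[symmetric] exp_of_nat_mult[symmetric] c1_def c2_def V_def using mn
    by (simp add: field_simps power2_eq_square)
  also have "- l * \<epsilon> + l\<^sup>2 * V / 8 = - 2 * \<epsilon>\<^sup>2 / V"
    unfolding l_def using V by (simp add: field_simps power2_eq_square)
  finally show ?thesis
    unfolding sum_u sum_v V_def by (simp add: N.emeasure_eq_measure)
qed

lemma weighted_loss_deviation_tail:
  assumes Dk: "prob_space Dk" "sets Dk = sets M" and Dp: "prob_space Dp" "sets Dp = sets M"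
    and m: "vec_measurable M h" "vec_measurable M h1" "vec_measurable M h2"
    and s: "\<forall>x. h x \<in> prob_simplex" "\<forall>x. h1 x \<in> prob_simplex" "\<forall>x. h2 x \<in> prob_simplex"
    and \<alpha>: "0 \<le> \<alpha>" "\<alpha> \<le> 1" and \<delta>: "0 < \<delta>" "\<delta> < 1" and mk_mp: "0 < mk" "0 < mp"
  shows "measure (PiM {..<mk} (\<lambda>_. Dk) \<Otimes>\<^sub>M PiM {..<mp} (\<lambda>_. Dp))
     {z \<in> space (PiM {..<mk} (\<lambda>_. Dk) \<Otimes>\<^sub>M PiM {..<mp} (\<lambda>_. Dp)).
        sqrt ((2 * \<alpha>\<^sup>2 / real mk + 2 * (1 - \<alpha>)\<^sup>2 / real mp) * ln (2 / \<delta>))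
        \<le> \<alpha> * (pop_loss Dk h h1 - emp_loss mk (fst z) h h1)
          + (1 - \<alpha>) * (pop_loss Dp h h2 - emp_loss mp (snd z) h h2)}
     \<le> \<delta> / 2"
proof -
  define V where "V = \<alpha>\<^sup>2 / real mk + (1 - \<alpha>)\<^sup>2 / real mp"
  have V: "0 < V"
    unfolding V_def using mk_mp by (cases "\<alpha> = 0") (auto intro!: add_pos_nonneg)
  have ln: "0 < ln (2 / \<delta>)" using \<delta> by simp
  define \<epsilon> where "\<epsilon> = sqrt ((2 * \<alpha>\<^sup>2 / real mk + 2 * (1 - \<alpha>)\<^sup>2 / real mp) * ln (2 / \<delta>))"
  have radicand: "(2 * \<alpha>\<^sup>2 / real mk + 2 * (1 - \<alpha>)\<^sup>2 / real mp) * ln (2 / \<delta>) = 2 * V * ln (2 / \<delta>)"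
    unfolding V_def by (simp add: field_simps)
  have \<epsilon>_sq: "\<epsilon>\<^sup>2 = 2 * V * ln (2 / \<delta>)" unfolding \<epsilon>_def radicand using V ln by simp
  have \<epsilon>: "0 < \<epsilon>" unfolding \<epsilon>_def radicand using V ln by simp
  have bounds: "\<forall>x\<in>space D. 0 \<le> l1dist (f x) (g x) \<and> l1dist (f x) (g x) \<le> 2"
    if "\<forall>x. f x \<in> prob_simplex" "\<forall>x. g x \<in> prob_simplex" for D and f g :: "'a \<Rightarrow> 'c::finite \<Rightarrow> real"
    using that by (simp add: l1dist_nonneg l1dist_prob_simplex_le_2)
  have "measure (PiM {..<mk} (\<lambda>_. Dk) \<Otimes>\<^sub>M PiM {..<mp} (\<lambda>_. Dp))
     {z \<in> space (PiM {..<mk} (\<lambda>_. Dk) \<Otimes>\<^sub>M PiM {..<mp} (\<lambda>_. Dp)).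
        \<epsilon> \<le> \<alpha> * (pop_loss Dk h h1 - emp_loss mk (fst z) h h1)
          + (1 - \<alpha>) * (pop_loss Dp h h2 - emp_loss mp (snd z) h h2)}
     \<le> exp (- 2 * \<epsilon>\<^sup>2 / (2\<^sup>2 * V))"
    unfolding pop_loss_def emp_loss_def V_def
    by (rule Hoeffding_two_samples[OF Dk(1) Dp(1) borel_measurable_l1dist[OF m(1,2) Dk(2)]
          borel_measurable_l1dist[OF m(1,3) Dp(2)] bounds[OF s(1,2)] bounds[OF s(1,3)] _ \<alpha> mk_mp \<epsilon>])
       simp
  also have "- 2 * \<epsilon>\<^sup>2 / (2\<^sup>2 * V) = - ln (2 / \<delta>)" unfolding \<epsilon>_sq using V by simp
  also have "exp (- ln (2 / \<delta>)) = \<delta> / 2" using \<delta> by (simp add: exp_minus)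
  finally show ?thesis unfolding \<epsilon>_def .
qed

theorem theorem2:
  fixes M Dk Dp Dt :: "'a measure"
    and hstar hp hp_hat hk :: "'a \<Rightarrow> 'c::finite \<Rightarrow> real"
    and H :: "('a \<Rightarrow> 'c \<Rightarrow> real) set"
    and \<alpha> \<delta> :: real and mk mp :: nat
  assumes C2: "CARD('c) \<ge> 2"
    and spaceM: "space M = UNIV"
    and Dk: "prob_space Dk" "sets Dk = sets M"
    and Dp: "prob_space Dp" "sets Dp = sets M"
    and Dt: "prob_space Dt" "sets Dt = sets M"
    and hstar: "\<forall>x. hstar x \<in> simplex_vertices" "vec_measurable M hstar"
    and hp: "\<forall>x. hp x \<in> prob_simplex" "vec_measurable M hp"
    and hp_hat: "\<forall>x. \<exists>j. hp_hat x = onehot j \<and> (\<forall>i. hp x i \<le> hp x j)" "vec_measurable M hp_hat"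
    and H: "\<forall>h\<in>H. (\<forall>x. h x \<in> simplex_vertices) \<and> vec_measurable M h"
    and hk: "hk \<in> H"
    and \<alpha>: "0 \<le> \<alpha>" "\<alpha> \<le> 1"
    and \<delta>: "0 < \<delta>" "\<delta> < 1"
    and m: "mk > 0" "mp > 0"
  shows "measure (PiM {..<mk} (\<lambda>_. Dk) \<Otimes>\<^sub>M PiM {..<mp} (\<lambda>_. Dp))
     {(S, T) \<in> space (PiM {..<mk} (\<lambda>_. Dk) \<Otimes>\<^sub>M PiM {..<mp} (\<lambda>_. Dp)).
        pop_loss Dt hk hstar
        \<le> train_loss \<alpha> mk S mp T hk hstar hp
          + sqrt ((2 * \<alpha>\<^sup>2 / real mk + 2 * (1 - \<alpha>)\<^sup>2 / real mp) * ln (2 / \<delta>))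
          + \<alpha> * (min_comb_loss Dt Dk H hstar + G_dist (G_class H) Dk Dt)
          + (1 - \<alpha>) * (min_comb_loss Dt Dp H hstar + G_dist (G_class H) Dp Dt
               + cond_term Dp {x \<in> space Dp. hstar x \<noteq> hp_hat x} hstar hp
               + cond_term Dp {x \<in> space Dp. hstar x = hp_hat x} hp_hat hp)}
   \<ge> 1 - \<delta>"
proof -
  have simplex: "\<forall>x. f x \<in> prob_simplex" if "\<forall>x. f x \<in> simplex_vertices" for f :: "'a \<Rightarrow> 'c \<Rightarrow> real"
    using that simplex_vertices_subset_prob_simplex by blast
  \<comment> \<open>Only one-hotness of the hard proxy label is used, not that it picks a largest coordinate.\<close>
  have hp_hat_vertex: "\<forall>x. hp_hat x \<in> simplex_vertices"
    using hp_hat(1) unfolding simplex_vertices_def by blast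
  have hk_vertex: "\<forall>x. hk x \<in> simplex_vertices" "vec_measurable M hk" using H hk by auto
  define N where "N = PiM {..<mk} (\<lambda>_. Dk) \<Otimes>\<^sub>M PiM {..<mp} (\<lambda>_. Dp)"
  interpret N: prob_space N unfolding N_def by (intro prob_space_pair prob_space_PiM) (use Dk Dp in auto)
  define \<epsilon> where "\<epsilon> = sqrt ((2 * \<alpha>\<^sup>2 / real mk + 2 * (1 - \<alpha>)\<^sup>2 / real mp) * ln (2 / \<delta>))"
  define dev where "dev = (\<lambda>z. \<alpha> * (pop_loss Dk hk hstar - emp_loss mk (fst z) hk hstar)
    + (1 - \<alpha>) * (pop_loss Dp hk hp - emp_loss mp (snd z) hk hp))"
  define R where "R = \<alpha> * (min_comb_loss Dt Dk H hstar + G_dist (G_class H) Dk Dt)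
    + (1 - \<alpha>) * (min_comb_loss Dt Dp H hstar + G_dist (G_class H) Dp Dt
         + cond_term Dp {x \<in> space Dp. hstar x \<noteq> hp_hat x} hstar hp
         + cond_term Dp {x \<in> space Dp. hstar x = hp_hat x} hp_hat hp)"
  define W where "W = \<alpha> * pop_loss Dk hk hstar + (1 - \<alpha>) * pop_loss Dp hk hp"
  have weighted: "pop_loss Dt hk hstar \<le> W + R"
    unfolding W_def R_def by (rule pop_loss_le_weighted[OF Dk Dp Dt H hstar hp hp_hat_vertex hp_hat(2) hk \<alpha>])
  note [measurable] = borel_measurable_l1dist[OF hk_vertex(2) hstar(2) Dk(2)]
    borel_measurable_l1dist[OF hk_vertex(2) hp(2) Dp(2)]
  have [measurable]: "dev \<in> borel_measurable N" unfolding dev_def N_def emp_loss_def by measurable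
  define good where "good = {z \<in> space N. pop_loss Dt hk hstar \<le> W - dev z + \<epsilon> + R}"
  have good_eq: "good = {(S, T) \<in> space N. pop_loss Dt hk hstar \<le> train_loss \<alpha> mk S mp T hk hstar hp + \<epsilon> + R}"
    unfolding good_def dev_def W_def train_loss_def by (auto simp: algebra_simps)
  have "measure N {z \<in> space N. \<epsilon> \<le> dev z} \<le> \<delta> / 2"
    unfolding N_def dev_def \<epsilon>_def
    by (rule weighted_loss_deviation_tail[OF Dk Dp hk_vertex(2) hstar(2) hp(2)
          simplex[OF hk_vertex(1)] simplex[OF hstar(1)] hp(1) \<alpha> \<delta> m])
  hence "1 - \<delta> \<le> measure N (space N - {z \<in> space N. \<epsilon> \<le> dev z})"
    using \<delta> by (subst N.prob_compl) auto
  also have "\<dots> \<le> measure N good"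
    using weighted by (intro N.finite_measure_mono) (auto simp: good_def)
  finally show ?thesis unfolding good_eq N_def \<epsilon>_def R_def by (simp add: add.assoc)
qed

end
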